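(* Every $2$-tree $G$ has, for every vertex $v\in V(G)$, a $1$-perfect orientation in which $v$ is a sink (in particular every $2$-tree is $1$-perfectly orientable). Every hollowed $2$-tree is $1$-perfectly orientable, but each of its $1$-perfect orientations has no sink.
   Context: An orientation of $G$ is $1$-perfect if for every vertex the out-neighborhood is a clique in $G$; $G$ is $1$-perfectly orientable if it has one. A sink is a vertex of out-degree $0$. $2$-trees: $K_2$ is a $2$-tree, and adding to a $2$-tree a new vertex adjacent to exactly two adjacent vertices yields a $2$-tree; there are no others. Hollowed $2$-trees: every cycle of length at least $4$ is a hollowed $2$-tree, and adding to a hollowed $2$-tree a new vertex adjacent to exactly two adjacent vertices yields a hollowed $2$-tree; there are no others. *)

theory Defs
  imports Main
begin

text \<open>A finite simple graph is given by a vertex set V and a set E of edges,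
each edge being a two-element subset of V.\<close>

definition adj :: "'a set set \<Rightarrow> 'a \<Rightarrow> 'a \<Rightarrow> bool" where
  "adj E u v \<longleftrightarrow> {u, v} \<in> E \<and> u \<noteq> v"

inductive two_tree :: "'a set \<Rightarrow> 'a set set \<Rightarrow> bool" where
  K2: "a \<noteq> b \<Longrightarrow> two_tree {a, b} {{a, b}}"
| extend: "two_tree V E \<Longrightarrow> w \<notin> V \<Longrightarrow> u \<in> V \<Longrightarrow> v \<in> V \<Longrightarrow> adj E u v
    \<Longrightarrow> two_tree (insert w V) (E \<union> {{w, u}, {w, v}})"

definition cycle_edges :: "'a list \<Rightarrow> 'a set set" where
  "cycle_edges vs = {{vs ! i, vs ! ((i + 1) mod length vs)} | i. i < length vs}"

inductive hollowed_two_tree :: "'a set \<Rightarrow> 'a set set \<Rightarrow> bool" where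
  cycle: "distinct vs \<Longrightarrow> length vs \<ge> 4 \<Longrightarrow> hollowed_two_tree (set vs) (cycle_edges vs)"
| extend: "hollowed_two_tree V E \<Longrightarrow> w \<notin> V \<Longrightarrow> u \<in> V \<Longrightarrow> v \<in> V \<Longrightarrow> adj E u v
    \<Longrightarrow> hollowed_two_tree (insert w V) (E \<union> {{w, u}, {w, v}})"

definition orientation :: "'a set \<Rightarrow> 'a set set \<Rightarrow> ('a \<times> 'a) set \<Rightarrow> bool" where
  "orientation V E D \<longleftrightarrow>
     (\<forall>(u, v) \<in> D. adj E u v) \<and>
     (\<forall>u v. adj E u v \<longrightarrow> ((u, v) \<in> D \<longleftrightarrow> (v, u) \<notin> D))"

definition out_nbrs :: "('a \<times> 'a) set \<Rightarrow> 'a \<Rightarrow> 'a set" where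
  "out_nbrs D x = {y. (x, y) \<in> D}"

definition is_clique :: "'a set set \<Rightarrow> 'a set \<Rightarrow> bool" where
  "is_clique E S \<longleftrightarrow> (\<forall>u \<in> S. \<forall>v \<in> S. u \<noteq> v \<longrightarrow> adj E u v)"

definition one_perfect :: "'a set \<Rightarrow> 'a set set \<Rightarrow> ('a \<times> 'a) set \<Rightarrow> bool" where
  "one_perfect V E D \<longleftrightarrow> orientation V E D \<and> (\<forall>x \<in> V. is_clique E (out_nbrs D x))"

definition one_perfectly_orientable :: "'a set \<Rightarrow> 'a set set \<Rightarrow> bool" where
  "one_perfectly_orientable V E \<longleftrightarrow> (\<exists>D. one_perfect V E D)"

definition is_sink :: "'a set \<Rightarrow> ('a \<times> 'a) set \<Rightarrow> 'a \<Rightarrow> bool" where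
  "is_sink V D v \<longleftrightarrow> v \<in> V \<and> out_nbrs D v = {}"

end

theory Submission
  imports Defs
begin

text \<open>
  Both parts go by induction along the construction, adding one vertex w joined to
  an edge ab. For 2-trees the invariant is stronger than the claim: for every edge xy
  there is a 1-perfect orientation in which x is a sink and x is the only out-neighbour
  of y. Such an orientation of the smaller graph extends by w \<rightarrow> a, w \<rightarrow> b for old edges,
  and, for the new edges wa and wb, by making w a sink or by letting w point only to a.

  For hollowed 2-trees, orienting the base cycle cyclically is 1-perfect and w \<rightarrow> a, w \<rightarrow> b
  extends it. On a cycle of length at least 4, an arc v \<rightarrow> u forces the next edge vx to
  point into v, since u and x are not adjacent; starting from a sink this propagates
  around the whole cycle back into the sink. After adding w, an orientation restricts to
  a sinkless one of the smaller graph, so only w can be a sink; then a and b both point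
  to w and need a second out-neighbour adjacent to w, which forces a \<rightarrow> b and b \<rightarrow> a.
\<close>

lemma adj_sym: "adj E u v \<longleftrightarrow> adj E v u"
  by (auto simp: adj_def insert_commute)

lemma adj_edges_subset: "\<Union>E \<subseteq> V \<Longrightarrow> adj E u v \<Longrightarrow> u \<in> V \<and> v \<in> V"
  by (auto simp: adj_def)

lemma adj_insert_two_edges_iff:
  "adj (E \<union> {{w, a}, {w, b}}) p q \<longleftrightarrow>
     adj E p q \<or> p \<noteq> q \<and> ({p, q} = {w, a} \<or> {p, q} = {w, b})"
  by (auto simp: adj_def)

lemma is_clique_mono: "E \<subseteq> E' \<Longrightarrow> is_clique E S \<Longrightarrow> is_clique E' S"
  by (auto simp: is_clique_def adj_def)

lemma orientation_arcs_in_vertices: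
  "orientation V E D \<Longrightarrow> \<Union>E \<subseteq> V \<Longrightarrow> (p, q) \<in> D \<Longrightarrow> p \<in> V \<and> q \<in> V"
  unfolding orientation_def using adj_edges_subset by fastforce

lemma orientation_sink_in_arc:
  "orientation V E D \<Longrightarrow> out_nbrs D v = {} \<Longrightarrow> adj E v u \<Longrightarrow> (u, v) \<in> D"
  by (auto simp: orientation_def out_nbrs_def)

lemma one_perfect_arc_propagates:
  assumes "one_perfect V E D" "v \<in> V" "(v, u) \<in> D" "adj E v x" "u \<noteq> x" "\<not> adj E u x"
  shows "(x, v) \<in> D"
proof -
  have "(v, x) \<notin> D"
    using assms unfolding one_perfect_def is_clique_def out_nbrs_def by blast
  then show ?thesis
    using assms unfolding one_perfect_def orientation_def by blast
qed

lemma one_perfect_restrict: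
  assumes D: "one_perfect V' E' D" and "V \<subseteq> V'" and E: "\<Union>E \<subseteq> V"
    and induced: "\<And>p q. p \<in> V \<Longrightarrow> q \<in> V \<Longrightarrow> adj E' p q \<longleftrightarrow> adj E p q"
  shows "one_perfect V E (D \<inter> V \<times> V)"
proof -
  have "orientation V E (D \<inter> V \<times> V)"
    using D induced adj_edges_subset[OF E] unfolding one_perfect_def orientation_def by fastforce
  moreover have "is_clique E (out_nbrs (D \<inter> V \<times> V) x)" if "x \<in> V" for x
  proof -
    have "is_clique E' (out_nbrs D x)"
      using D that \<open>V \<subseteq> V'\<close> unfolding one_perfect_def by blast
    then show ?thesis
      using induced unfolding is_clique_def out_nbrs_def by blast
  qed
  ultimately show ?thesis
    unfolding one_perfect_def by blast
qed

lemma one_perfect_extend: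
  assumes D: "one_perfect V E D" and E: "\<Union>E \<subseteq> V" and w: "w \<notin> V" and "a \<in> V" "b \<in> V"
    and F: "F \<subseteq> {(w, a), (a, w), (w, b), (b, w)}"
    and F_orients: "\<And>x. x \<in> {a, b} \<Longrightarrow> (w, x) \<in> F \<longleftrightarrow> (x, w) \<notin> F"
    and cliques: "\<And>x. x \<in> fst ` F \<Longrightarrow>
      is_clique (E \<union> {{w, a}, {w, b}}) (out_nbrs (D \<union> F) x)"
  shows "one_perfect (insert w V) (E \<union> {{w, a}, {w, b}}) (D \<union> F)"
proof -
  let ?E' = "E \<union> {{w, a}, {w, b}}"
  have "orientation V E D" using D unfolding one_perfect_def by blast
  note D_in_V = orientation_arcs_in_vertices[OF this E]
  have "w \<noteq> a" "w \<noteq> b" using w \<open>a \<in> V\<close> \<open>b \<in> V\<close> by auto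
  have "orientation (insert w V) ?E' (D \<union> F)"
    unfolding orientation_def
  proof (intro conjI allI impI)
    show "\<forall>(p, q) \<in> D \<union> F. adj ?E' p q"
    proof (intro ballI, clarify)
      fix p q assume pq: "(p, q) \<in> D \<union> F"
      show "adj ?E' p q"
      proof (cases "(p, q) \<in> D")
        case True
        then have "adj E p q" using D unfolding one_perfect_def orientation_def by blast
        then show ?thesis by (auto simp: adj_def)
      next
        case False
        then have "(p, q) \<in> F" using pq by blast
        then show ?thesis using F \<open>w \<noteq> a\<close> \<open>w \<noteq> b\<close> by (auto simp: adj_def)
      qed
    qed
  next
    fix p q assume "adj ?E' p q"
    then consider "adj E p q" | x where "x \<in> {a, b}" "p = w \<and> q = x \<or> p = x \<and> q = w"
      unfolding adj_insert_two_edges_iff doubleton_eq_iff by blast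
    then show "(p, q) \<in> D \<union> F \<longleftrightarrow> (q, p) \<notin> D \<union> F"
    proof cases
      case 1
      then have "p \<in> V" "q \<in> V" using adj_edges_subset[OF E] by blast+
      then have "(p, q) \<notin> F" "(q, p) \<notin> F" using F w by blast+
      moreover have "(p, q) \<in> D \<longleftrightarrow> (q, p) \<notin> D"
        using 1 D unfolding one_perfect_def orientation_def by blast
      ultimately show ?thesis by blast
    next
      case 2
      then have "(p, q) \<notin> D" "(q, p) \<notin> D" using D_in_V w by blast+
      then show ?thesis using 2 F_orients by blast
    qed
  qed
  moreover have "is_clique ?E' (out_nbrs (D \<union> F) x)" if "x \<in> insert w V" for x
  proof (cases "x \<in> fst ` F")
    case True
    then show ?thesis using cliques by blast
  next
    case False
    then have "out_nbrs (D \<union> F) x = out_nbrs D x"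
      unfolding out_nbrs_def by force
    moreover have "is_clique E (out_nbrs D x)"
    proof (cases "x = w")
      case True
      then have "out_nbrs D x = {}" using D_in_V w unfolding out_nbrs_def by blast
      then show ?thesis unfolding is_clique_def by blast
    next
      case False
      then show ?thesis using that D unfolding one_perfect_def by blast
    qed
    ultimately show ?thesis
      using is_clique_mono[of E ?E'] by auto
  qed
  ultimately show ?thesis
    unfolding one_perfect_def by blast
qed

lemma one_perfect_add_source:
  assumes D: "one_perfect V E D" and E: "\<Union>E \<subseteq> V" and w: "w \<notin> V" and ab: "adj E a b"
  shows "one_perfect (insert w V) (E \<union> {{w, a}, {w, b}}) (D \<union> {(w, a), (w, b)})"
proof (rule one_perfect_extend[OF D E w])
  show "a \<in> V" "b \<in> V" using adj_edges_subset[OF E ab] by blast+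
  then show "(w, x) \<in> {(w, a), (w, b)} \<longleftrightarrow> (x, w) \<notin> {(w, a), (w, b)}"
    if "x \<in> {a, b}" for x
    using that w by auto
  have "out_nbrs (D \<union> {(w, a), (w, b)}) w = {a, b}"
    using orientation_arcs_in_vertices[OF _ E] D w unfolding one_perfect_def out_nbrs_def by blast
  then show "is_clique (E \<union> {{w, a}, {w, b}}) (out_nbrs (D \<union> {(w, a), (w, b)}) x)"
    if "x \<in> fst ` {(w, a), (w, b)}" for x
    using that ab by (auto simp: is_clique_def adj_def insert_commute)
qed auto

lemma one_perfect_add_sink:
  assumes D: "one_perfect V E D" and E: "\<Union>E \<subseteq> V" and w: "w \<notin> V" and ab: "adj E a b"
    and a: "out_nbrs D a = {}" and b: "out_nbrs D b = {a}"
  shows "one_perfect (insert w V) (E \<union> {{w, a}, {w, b}}) (D \<union> {(a, w), (b, w)})"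
    and "out_nbrs (D \<union> {(a, w), (b, w)}) w = {}"
    and "out_nbrs (D \<union> {(a, w), (b, w)}) a = {w}"
proof -
  let ?D' = "D \<union> {(a, w), (b, w)}"
  have "a \<in> V" "b \<in> V" "a \<noteq> b" using adj_edges_subset[OF E ab] ab by (auto simp: adj_def)
  show "out_nbrs ?D' w = {}"
    using orientation_arcs_in_vertices[OF _ E] D w \<open>a \<in> V\<close> \<open>b \<in> V\<close>
    unfolding one_perfect_def out_nbrs_def by blast
  show out_a: "out_nbrs ?D' a = {w}" using a \<open>a \<noteq> b\<close> unfolding out_nbrs_def by blast
  have out_b: "out_nbrs ?D' b = {a, w}" using b \<open>a \<noteq> b\<close> unfolding out_nbrs_def by blast
  show "one_perfect (insert w V) (E \<union> {{w, a}, {w, b}}) ?D'"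
  proof (rule one_perfect_extend[OF D E w \<open>a \<in> V\<close> \<open>b \<in> V\<close>])
    show "(w, x) \<in> {(a, w), (b, w)} \<longleftrightarrow> (x, w) \<notin> {(a, w), (b, w)}" if "x \<in> {a, b}" for x
      using that w \<open>a \<in> V\<close> \<open>b \<in> V\<close> by auto
    show "is_clique (E \<union> {{w, a}, {w, b}}) (out_nbrs ?D' x)" if "x \<in> fst ` {(a, w), (b, w)}" for x
      using that out_a out_b w \<open>a \<in> V\<close> unfolding is_clique_def adj_def by auto
  qed auto
qed

lemma one_perfect_add_between:
  assumes D: "one_perfect V E D" and E: "\<Union>E \<subseteq> V" and w: "w \<notin> V" and ab: "adj E a b"
    and a: "out_nbrs D a = {}" and b: "out_nbrs D b = {a}"
  shows "one_perfect (insert w V) (E \<union> {{w, a}, {w, b}}) (D \<union> {(w, a), (b, w)})"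
    and "out_nbrs (D \<union> {(w, a), (b, w)}) a = {}"
    and "out_nbrs (D \<union> {(w, a), (b, w)}) w = {a}"
proof -
  let ?D' = "D \<union> {(w, a), (b, w)}"
  have "a \<in> V" "b \<in> V" "a \<noteq> b" using adj_edges_subset[OF E ab] ab by (auto simp: adj_def)
  show "out_nbrs ?D' a = {}" using a \<open>a \<noteq> b\<close> w \<open>a \<in> V\<close> unfolding out_nbrs_def by blast
  show out_w: "out_nbrs ?D' w = {a}"
    using orientation_arcs_in_vertices[OF _ E] D w \<open>b \<in> V\<close>
    unfolding one_perfect_def out_nbrs_def by blast
  have out_b: "out_nbrs ?D' b = {a, w}" using b \<open>a \<noteq> b\<close> unfolding out_nbrs_def by blast
  show "one_perfect (insert w V) (E \<union> {{w, a}, {w, b}}) ?D'"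
  proof (rule one_perfect_extend[OF D E w \<open>a \<in> V\<close> \<open>b \<in> V\<close>])
    show "(w, x) \<in> {(w, a), (b, w)} \<longleftrightarrow> (x, w) \<notin> {(w, a), (b, w)}" if "x \<in> {a, b}" for x
      using that w \<open>a \<in> V\<close> \<open>b \<in> V\<close> \<open>a \<noteq> b\<close> by auto
    show "is_clique (E \<union> {{w, a}, {w, b}}) (out_nbrs ?D' x)" if "x \<in> fst ` {(w, a), (b, w)}" for x
      using that out_w out_b w \<open>a \<in> V\<close> unfolding is_clique_def adj_def by auto
  qed auto
qed

lemma two_tree_edges_subset: "two_tree V E \<Longrightarrow> \<Union>E \<subseteq> V"
  by (induction rule: two_tree.induct) auto

lemma two_tree_edge_sink:
  "two_tree V E \<Longrightarrow> adj E x y \<Longrightarrow>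
    \<exists>D. one_perfect V E D \<and> out_nbrs D x = {} \<and> out_nbrs D y = {x}"
proof (induction arbitrary: x y rule: two_tree.induct)
  case (K2 a b)
  then have "x \<noteq> y" "{x, y} = {a, b}" by (auto simp: adj_def)
  then have "one_perfect {a, b} {{a, b}} {(y, x)}"
    unfolding one_perfect_def orientation_def is_clique_def out_nbrs_def adj_def
    by (auto simp: doubleton_eq_iff)
  moreover have "out_nbrs {(y, x)} x = {}" "out_nbrs {(y, x)} y = {x}"
    using \<open>x \<noteq> y\<close> by (auto simp: out_nbrs_def)
  ultimately show ?case by blast
next
  case (extend V E w a b)
  let ?E' = "E \<union> {{w, a}, {w, b}}"
  have E: "\<Union>E \<subseteq> V" using two_tree_edges_subset[OF extend.hyps(1)] .
  have new_edge: "\<exists>D. one_perfect (insert w V) ?E' D \<and> out_nbrs D x = {} \<and> out_nbrs D y = {x}"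
    if ab': "adj E a' b'" "?E' = E \<union> {{w, a'}, {w, b'}}" "x = w \<and> y = a' \<or> x = a' \<and> y = w"
    for a' b'
  proof -
    obtain D where D: "one_perfect V E D" "out_nbrs D a' = {}" "out_nbrs D b' = {a'}"
      using extend.IH ab'(1) by blast
    note sink = one_perfect_add_sink[OF D(1) E extend.hyps(2) ab'(1) D(2,3)]
    note between = one_perfect_add_between[OF D(1) E extend.hyps(2) ab'(1) D(2,3)]
    from ab'(3) show ?thesis
    proof
      assume "x = w \<and> y = a'"
      with sink show ?thesis unfolding ab'(2) by blast
    next
      assume "x = a' \<and> y = w"
      with between show ?thesis unfolding ab'(2) by blast
    qed
  qed
  from extend.prems consider "adj E x y"
    | "x = w \<and> y = a \<or> x = a \<and> y = w" | "x = w \<and> y = b \<or> x = b \<and> y = w"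
    unfolding adj_insert_two_edges_iff doubleton_eq_iff by blast
  then show ?case
  proof cases
    case 1
    then obtain D where D: "one_perfect V E D" "out_nbrs D x = {}" "out_nbrs D y = {x}"
      using extend.IH by blast
    have "x \<noteq> w" "y \<noteq> w" using adj_edges_subset[OF E 1] extend.hyps(2) by auto
    then have "out_nbrs (D \<union> {(w, a), (w, b)}) x = {}" "out_nbrs (D \<union> {(w, a), (w, b)}) y = {x}"
      using D(2,3) unfolding out_nbrs_def by blast+
    then show ?thesis
      using one_perfect_add_source[OF D(1) E extend.hyps(2,5)] by blast
  next
    case 2
    then show ?thesis using new_edge[OF extend.hyps(5)] by blast
  next
    case 3
    have "adj E b a" using extend.hyps(5) adj_sym by metis
    then show ?thesis using new_edge[of b a] 3 by (simp add: insert_commute)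
  qed
qed

lemma two_tree_has_neighbour: "two_tree V E \<Longrightarrow> v \<in> V \<Longrightarrow> \<exists>u. adj E v u"
proof (induction rule: two_tree.induct)
  case (K2 a b)
  then show ?case by (auto simp: adj_def insert_commute)
next
  case (extend V E w a b)
  show ?case
  proof (cases "v = w")
    case True
    then have "adj (E \<union> {{w, a}, {w, b}}) v a"
      using extend.hyps(2,3) by (auto simp: adj_def)
    then show ?thesis by blast
  next
    case False
    then obtain u where "adj E v u" using extend.IH extend.prems by blast
    then have "adj (E \<union> {{w, a}, {w, b}}) v u" by (simp add: adj_def)
    then show ?thesis by blast
  qed
qed

lemma two_tree_nonempty: "two_tree V E \<Longrightarrow> V \<noteq> {}"
  by (induction rule: two_tree.induct) auto

lemma two_tree_sink_anywhere:
  assumes "two_tree V E" "v \<in> V"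
  shows "\<exists>D. one_perfect V E D \<and> is_sink V D v"
proof -
  obtain u where "adj E v u" using two_tree_has_neighbour[OF assms] by blast
  then obtain D where "one_perfect V E D" "out_nbrs D v = {}"
    using two_tree_edge_sink[OF assms(1)] by blast
  then show ?thesis using assms(2) unfolding is_sink_def by blast
qed

text \<open>Indexing the cycle by all of nat, so that vertex i + 1 follows vertex i without
  case distinctions at the end of the list.\<close>

definition cyclic_nth :: "'a list \<Rightarrow> nat \<Rightarrow> 'a" where
  "cyclic_nth vs i = vs ! (i mod length vs)"

lemma mod_add_right_eq_self_iff: "(k + d) mod n = k mod n \<longleftrightarrow> n dvd (d :: nat)"
  using mod_eq_dvd_iff_nat[of k "k + d" n] by simp

lemma cyclic_nth_eq_iff:
  "distinct vs \<Longrightarrow> vs \<noteq> [] \<Longrightarrow>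
    cyclic_nth vs i = cyclic_nth vs j \<longleftrightarrow> i mod length vs = j mod length vs"
  unfolding cyclic_nth_def by (simp add: nth_eq_iff_index_eq)

lemma cyclic_nth_shift:
  "i mod length vs = j mod length vs \<Longrightarrow> cyclic_nth vs (i + k) = cyclic_nth vs (j + k)"
  unfolding cyclic_nth_def using mod_add_cong by metis

lemma cyclic_nth_in_set: "vs \<noteq> [] \<Longrightarrow> cyclic_nth vs i \<in> set vs"
  by (simp add: cyclic_nth_def)

lemma cycle_edges_eq_range:
  assumes "vs \<noteq> []"
  shows "cycle_edges vs = range (\<lambda>i. {cyclic_nth vs i, cyclic_nth vs (Suc i)})"
proof -
  have "cyclic_nth vs i = vs ! (i mod length vs)"
    "cyclic_nth vs (Suc i) = vs ! ((i mod length vs + 1) mod length vs)" for i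
    unfolding cyclic_nth_def by (simp_all add: mod_Suc_eq)
  then show ?thesis
    using assms unfolding cycle_edges_def by (auto intro!: image_eqI)
qed

lemma adj_cycle_edges_iff:
  assumes vs: "distinct vs" "2 \<le> length vs"
  shows "adj (cycle_edges vs) x y \<longleftrightarrow>
    (\<exists>i. {x, y} = {cyclic_nth vs i, cyclic_nth vs (Suc i)})"
proof -
  have ne: "vs \<noteq> []" using vs by auto
  have "cyclic_nth vs i \<noteq> cyclic_nth vs (Suc i)" for i
  proof -
    have "(i + 1) mod length vs \<noteq> i mod length vs"
      unfolding mod_add_right_eq_self_iff using vs(2) by auto
    then show ?thesis
      unfolding cyclic_nth_eq_iff[OF vs(1) ne] by simp
  qed
  then have "x \<noteq> y" if "{x, y} = {cyclic_nth vs i, cyclic_nth vs (Suc i)}" for i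
    using that by (metis doubleton_eq_iff)
  then show ?thesis
    unfolding adj_def cycle_edges_eq_range[OF ne] image_iff by blast
qed

lemma adj_cyclic_nth_Suc:
  assumes "distinct vs" "2 \<le> length vs"
  shows "adj (cycle_edges vs) (cyclic_nth vs i) (cyclic_nth vs (Suc i))"
  unfolding adj_cycle_edges_iff[OF assms] by blast

lemma cyclic_nth_two_apart:
  assumes vs: "distinct vs" "4 \<le> length vs"
  shows "cyclic_nth vs i \<noteq> cyclic_nth vs (i + 2)"
    and "\<not> adj (cycle_edges vs) (cyclic_nth vs i) (cyclic_nth vs (i + 2))"
proof -
  let ?n = "length vs"
  have ne: "vs \<noteq> []" and two: "2 \<le> ?n" using vs by auto
  have not_dvd: "\<not> ?n dvd d" if "0 < d" "d < 4" for d
    using vs that by (auto dest: dvd_imp_le)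
  have "(i + 2) mod ?n \<noteq> i mod ?n"
    unfolding mod_add_right_eq_self_iff using not_dvd[of 2] by simp
  then show "cyclic_nth vs i \<noteq> cyclic_nth vs (i + 2)"
    unfolding cyclic_nth_eq_iff[OF vs(1) ne] by simp
  show "\<not> adj (cycle_edges vs) (cyclic_nth vs i) (cyclic_nth vs (i + 2))"
  proof
    assume "adj (cycle_edges vs) (cyclic_nth vs i) (cyclic_nth vs (i + 2))"
    then obtain j where "{cyclic_nth vs i, cyclic_nth vs (i + 2)} = {cyclic_nth vs j, cyclic_nth vs (Suc j)}"
      unfolding adj_cycle_edges_iff[OF vs(1) two] by blast
    then consider
        "i mod ?n = j mod ?n" "(i + 2) mod ?n = Suc j mod ?n"
      | "i mod ?n = Suc j mod ?n" "(i + 2) mod ?n = j mod ?n"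
      unfolding doubleton_eq_iff cyclic_nth_eq_iff[OF vs(1) ne] by blast
    then show False
    proof cases
      case 1
      then have "(j + 1 + 1) mod ?n = (j + 1) mod ?n"
        using mod_add_cong[of i ?n j 2 2] by simp
      then have "?n dvd 1" by (simp only: mod_add_right_eq_self_iff)
      then show False using not_dvd[of 1] by simp
    next
      case 2
      then have "(j + 3) mod ?n = j mod ?n"
        using mod_add_cong[of i ?n "Suc j" 2 2] by (simp add: eval_nat_numeral)
      then have "?n dvd 3" by (simp only: mod_add_right_eq_self_iff)
      then show False using not_dvd[of 3] by simp
    qed
  qed
qed

lemma cycle_one_perfect:
  assumes vs: "distinct vs" "4 \<le> length vs"
  shows "one_perfect (set vs) (cycle_edges vs)
    (range (\<lambda>i. (cyclic_nth vs i, cyclic_nth vs (Suc i))))"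
    (is "one_perfect _ _ ?D")
proof -
  let ?c = "cyclic_nth vs"
  have ne: "vs \<noteq> []" and two: "2 \<le> length vs" using vs by auto
  have successor_unique: "y = z" if arcs: "(x, y) \<in> ?D" "(x, z) \<in> ?D" for x y z
  proof -
    obtain j k where "x = ?c j" "y = ?c (Suc j)" "x = ?c k" "z = ?c (Suc k)"
      using arcs by blast
    then show ?thesis
      using cyclic_nth_eq_iff[OF vs(1) ne] cyclic_nth_shift[of j vs k 1] by simp
  qed
  have backward: "(?c (Suc i), ?c i) \<notin> ?D" for i
  proof
    assume "(?c (Suc i), ?c i) \<in> ?D"
    moreover have "(?c (Suc i), ?c (Suc (Suc i))) \<in> ?D" by blast
    ultimately have "?c i = ?c (Suc (Suc i))" by (rule successor_unique)
    then show False using cyclic_nth_two_apart(1)[OF vs, of i] by simp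
  qed
  have "orientation (set vs) (cycle_edges vs) ?D"
    unfolding orientation_def
  proof (intro conjI allI impI)
    show "\<forall>(p, q) \<in> ?D. adj (cycle_edges vs) p q"
      using adj_cyclic_nth_Suc[OF vs(1) two] by auto
  next
    fix p q assume "adj (cycle_edges vs) p q"
    then obtain i where pq: "p = ?c i \<and> q = ?c (Suc i) \<or> p = ?c (Suc i) \<and> q = ?c i"
      unfolding adj_cycle_edges_iff[OF vs(1) two] doubleton_eq_iff by blast
    have "(?c i, ?c (Suc i)) \<in> ?D" by blast
    then show "(p, q) \<in> ?D \<longleftrightarrow> (q, p) \<notin> ?D"
      using pq backward[of i] by auto
  qed
  moreover have "is_clique (cycle_edges vs) (out_nbrs ?D x)" for x
    using successor_unique unfolding is_clique_def out_nbrs_def by blast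
  ultimately show ?thesis
    unfolding one_perfect_def by blast
qed

lemma cycle_one_perfect_no_sink:
  assumes vs: "distinct vs" "4 \<le> length vs"
    and D: "one_perfect (set vs) (cycle_edges vs) D" and "v \<in> set vs"
  shows "out_nbrs D v \<noteq> {}"
proof
  assume sink: "out_nbrs D v = {}"
  let ?c = "cyclic_nth vs" and ?n = "length vs"
  have ne: "vs \<noteq> []" and two: "2 \<le> ?n" using vs by auto
  obtain i where v: "v = ?c i"
    using \<open>v \<in> set vs\<close> unfolding in_set_conv_nth cyclic_nth_def by (metis mod_less)
  have orientation: "orientation (set vs) (cycle_edges vs) D"
    using D unfolding one_perfect_def by blast
  have backward: "(?c (i + Suc k), ?c (i + k)) \<in> D" for k
  proof (induction k)
    case 0
    show ?case
      using orientation_sink_in_arc[OF orientation sink] adj_cyclic_nth_Suc[OF vs(1) two] v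
      by simp
  next
    case (Suc k)
    have "?c (i + Suc k) \<in> set vs" using cyclic_nth_in_set[OF ne] .
    moreover have "adj (cycle_edges vs) (?c (i + Suc k)) (?c (i + Suc (Suc k)))"
      using adj_cyclic_nth_Suc[OF vs(1) two, of "i + Suc k"] by simp
    moreover have "?c (i + k) \<noteq> ?c (i + Suc (Suc k))"
      and "\<not> adj (cycle_edges vs) (?c (i + k)) (?c (i + Suc (Suc k)))"
      using cyclic_nth_two_apart[OF vs, of "i + k"] by simp_all
    ultimately show ?case
      using one_perfect_arc_propagates[OF D _ Suc.IH] by blast
  qed
  have "?c (i + ?n) = v"
    using v unfolding cyclic_nth_def by simp
  moreover have "Suc (?n - 1) = ?n" using two by simp
  ultimately have "(v, ?c (i + (?n - 1))) \<in> D"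
    using backward[of "?n - 1"] by simp
  then show False using sink unfolding out_nbrs_def by blast
qed

lemma hollowed_two_tree_edges_subset: "hollowed_two_tree V E \<Longrightarrow> \<Union>E \<subseteq> V"
  by (induction rule: hollowed_two_tree.induct)
    (auto simp: cycle_edges_def intro!: nth_mem mod_less_divisor)

lemma hollowed_two_tree_one_perfectly_orientable:
  "hollowed_two_tree V E \<Longrightarrow> one_perfectly_orientable V E"
proof (induction rule: hollowed_two_tree.induct)
  case (cycle vs)
  then show ?case
    using cycle_one_perfect unfolding one_perfectly_orientable_def by blast
next
  case (extend V E w a b)
  then obtain D where "one_perfect V E D"
    unfolding one_perfectly_orientable_def by blast
  from one_perfect_add_source[OF this hollowed_two_tree_edges_subset[OF extend.hyps(1)]
      extend.hyps(2,5)]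
  show ?case
    unfolding one_perfectly_orientable_def by blast
qed

lemma hollowed_two_tree_no_sink:
  "hollowed_two_tree V E \<Longrightarrow> one_perfect V E D \<Longrightarrow> \<not> is_sink V D v"
proof (induction arbitrary: D v rule: hollowed_two_tree.induct)
  case (cycle vs)
  then show ?case
    using cycle_one_perfect_no_sink[OF cycle.hyps cycle.prems] unfolding is_sink_def by blast
next
  case (extend V E w a b)
  let ?E' = "E \<union> {{w, a}, {w, b}}"
  have E: "\<Union>E \<subseteq> V" using hollowed_two_tree_edges_subset[OF extend.hyps(1)] .
  have D: "one_perfect (insert w V) ?E' D" using extend.prems .
  then have orientation: "orientation (insert w V) ?E' D"
    unfolding one_perfect_def by blast
  have w: "w \<notin> V" using extend.hyps(2) .
  have induced: "adj ?E' p q \<longleftrightarrow> adj E p q" if "p \<in> V" "q \<in> V" for p q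
    using that w unfolding adj_insert_two_edges_iff doubleton_eq_iff by blast
  have "one_perfect V E (D \<inter> V \<times> V)"
    using one_perfect_restrict[OF D _ E induced] by blast
  then have out_in_V: "\<exists>z \<in> V. (x, z) \<in> D" if "x \<in> V" for x
    using extend.IH that unfolding is_sink_def out_nbrs_def by blast
  show ?case
  proof
    assume "is_sink (insert w V) D v"
    then have sink: "out_nbrs D w = {}"
      using out_in_V unfolding is_sink_def out_nbrs_def by blast
    have arc: "(x, y) \<in> D" if xy: "{x, y} = {a, b}" "x \<noteq> y" for x y
    proof -
      have "x \<in> V" using xy extend.hyps(3,4) unfolding doubleton_eq_iff by blast
      then have "adj ?E' w x" using xy w by (auto simp: adj_def)
      then have "(x, w) \<in> D" by (rule orientation_sink_in_arc[OF orientation sink])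
      obtain z where z: "z \<in> V" "(x, z) \<in> D" using out_in_V \<open>x \<in> V\<close> by blast
      have "z \<noteq> x"
        using orientation z(2) unfolding orientation_def adj_def by blast
      have "is_clique ?E' (out_nbrs D x)" using D \<open>x \<in> V\<close> unfolding one_perfect_def by blast
      moreover have "z \<noteq> w" using z(1) w by blast
      ultimately have "adj ?E' z w"
        using \<open>(x, w) \<in> D\<close> z(2) unfolding is_clique_def out_nbrs_def by blast
      moreover have "\<not> adj E z w" using adj_edges_subset[OF E, of z w] w by blast
      ultimately have "z = a \<or> z = b"
        unfolding adj_insert_two_edges_iff doubleton_eq_iff by blast
      then have "z = y" using xy \<open>z \<noteq> x\<close> unfolding doubleton_eq_iff by blast
      then show ?thesis using z(2) by blast
    qed
    have "adj ?E' a b" using extend.hyps(5) by (simp add: adj_def)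
    moreover have "(a, b) \<in> D" "(b, a) \<in> D"
      using arc extend.hyps(5) unfolding adj_def by blast+
    ultimately show False
      using orientation unfolding orientation_def by blast
  qed
qed

theorem lemma4p2:
  shows "(\<forall>(V :: 'a set) E. two_tree V E \<longrightarrow>
            (\<forall>v \<in> V. \<exists>D. one_perfect V E D \<and> is_sink V D v) \<and>
            one_perfectly_orientable V E)
       \<and> (\<forall>(V :: 'a set) E. hollowed_two_tree V E \<longrightarrow>
            one_perfectly_orientable V E \<and>
            (\<forall>D. one_perfect V E D \<longrightarrow> \<not> (\<exists>v. is_sink V D v)))"
proof (intro conjI allI impI)
  fix V :: "'a set" and E
  assume tree: "two_tree V E"
  show sinks: "\<forall>v \<in> V. \<exists>D. one_perfect V E D \<and> is_sink V D v"
    using two_tree_sink_anywhere[OF tree] by blast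
  show "one_perfectly_orientable V E"
    using sinks two_tree_nonempty[OF tree] unfolding one_perfectly_orientable_def by blast
next
  fix V :: "'a set" and E
  assume "hollowed_two_tree V E"
  then show "one_perfectly_orientable V E"
    by (rule hollowed_two_tree_one_perfectly_orientable)
next
  fix V :: "'a set" and E D
  assume "hollowed_two_tree V E" "one_perfect V E D"
  from hollowed_two_tree_no_sink[OF this] show "\<not> (\<exists>v. is_sink V D v)" by blast
qed

end
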